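(* Let $0<\alpha<1$ and let $q,r\in\mathbb{N}^+$. For $n\in\mathbb{Z}$ define $$I_{n,q}^{r}=\begin{cases}\dfrac{1}{\Gamma(1-\alpha)}\displaystyle\int_{0}^{1}(n+1-s)^{-\alpha}\,\frac{\mathrm{d}}{\mathrm{d}s}\binom{s-q+r-1}{r}\,\mathrm{d}s, & n\ge 0,\\[2mm] 0, & n<0,\end{cases}$$ and define backward differences in $n$ by $\nabla^{0}I_{n,q}^{r}=I_{n,q}^{r}$ and $\nabla^{k}I_{n,q}^{r}=\nabla^{k-1}I_{n,q}^{r}-\nabla^{k-1}I_{n-1,q}^{r}$ for $k\ge1$. Then for every $k\in\mathbb{N}$ and every $n\ge k$: (i) if $r\le q$, then $(-1)^{k+r+1}\nabla^{k}I_{n,q}^{r}\ge 0$; (ii) if $r>q$, then $(-1)^{k+q+1}\nabla^{k}I_{n,q}^{r}\ge 0$.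
   Context: For real $x$ and $r\in\mathbb{N}$, $\binom{x}{r}=\frac{x(x-1)\cdots(x-r+1)}{r!}$ is the binomial coefficient viewed as a polynomial in $x$; thus $\binom{s-q+r-1}{r}$ is a polynomial in $s$ of degree $r$. *)

theory Defs
  imports "HOL-Analysis.Analysis"
begin

definition I_coef :: "real \<Rightarrow> nat \<Rightarrow> nat \<Rightarrow> int \<Rightarrow> real" where
  "I_coef \<alpha> q r n =
     (if n \<ge> 0 then
        (1 / Gamma (1 - \<alpha>)) *
        integral {0..1} (\<lambda>s. (real_of_int n + 1 - s) powr (- \<alpha>) *
                              deriv (\<lambda>x. (x - real q + real r - 1) gchoose r) s)
      else 0)"

fun bdiff :: "nat \<Rightarrow> (int \<Rightarrow> real) \<Rightarrow> int \<Rightarrow> real" where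
  "bdiff 0 f n = f n"
| "bdiff (Suc k) f n = bdiff k f n - bdiff k f (n - 1)"

end

theory Submission
  imports Defs
begin

text \<open>Let \<open>P(s) = binom(s-q+r-1, r)\<close> and let \<open>\<Phi>\<^sub>k\<close> be the \<open>k\<close>-th backward difference,
  with step 1, of \<open>y powr -\<alpha>\<close>. Differencing under the integral sign gives
  \<open>\<nabla>\<^sup>k I(n) = \<Gamma>(1-\<alpha>)\<inverse> \<integral>\<^sub>0\<^sup>1 \<Phi>\<^sub>k(n+1-s) P'(s) ds\<close>. Since \<open>y powr -\<alpha>\<close> is completely monotone
  on \<open>(0,\<infinity>)\<close>, the function \<open>(-1)\<^sup>k \<Phi>\<^sub>k\<close> is completely monotone on \<open>(k,\<infinity>)\<close>, hence nonnegative and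
  nonincreasing there. The roots \<open>q+i+1-r\<close> (\<open>i < r\<close>) of \<open>P\<close> avoid \<open>(0,1)\<close>.
  If \<open>r \<le> q\<close> they are all at least \<open>1\<close>, so \<open>(-1)\<^sup>r\<^sup>+\<^sup>1 P'\<close> is nonnegative on \<open>(0,1)\<close> and the integrand
  has constant sign. If \<open>r > q\<close>, then \<open>P(0) = P(1) = 0\<close> and \<open>(-1)\<^sup>q P > 0\<close> on \<open>(0,1)\<close>; the
  logarithmic derivative of \<open>P\<close> decreases there, so \<open>(-1)\<^sup>q P'\<close> changes sign once, from \<open>+\<close> to
  \<open>-\<close>, at some \<open>c < 1\<close>. As \<open>\<integral>\<^sub>0\<^sup>1 P' = 0\<close>, one may subtract \<open>\<Phi>\<^sub>k(n+1-c)\<close> from \<open>\<Phi>\<^sub>k(n+1-s)\<close>, and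
  the monotonicity of \<open>\<Phi>\<^sub>k\<close> then gives the integrand constant sign.\<close>

subsection \<open>Backward differences\<close>

definition backward_diff :: "(real \<Rightarrow> real) \<Rightarrow> real \<Rightarrow> real" where
  "backward_diff f x = f x - f (x - 1)"

lemma bdiff_shift_eq_backward_diff:
  "bdiff k (\<lambda>m. f (real_of_int m + c)) n = (backward_diff ^^ k) f (real_of_int n + c)"
  by (induction k arbitrary: n) (simp_all add: backward_diff_def algebra_simps)

lemma bdiff_mult_right: "bdiff k (\<lambda>m. f m * c) n = bdiff k f n * c"
  by (induction k arbitrary: n) (simp_all add: left_diff_distrib)

lemma bdiff_integral:
  fixes g :: "int \<Rightarrow> real \<Rightarrow> real"
  assumes "\<And>m. n - int k \<le> m \<Longrightarrow> g m integrable_on S"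
    and "\<And>m. n - int k \<le> m \<Longrightarrow> f m = c * integral S (g m)"
  shows "(\<lambda>s. bdiff k (\<lambda>m. g m s) n) integrable_on S \<and>
         bdiff k f n = c * integral S (\<lambda>s. bdiff k (\<lambda>m. g m s) n)"
  using assms
proof (induction k arbitrary: n)
  case (Suc k)
  have "(\<lambda>s. bdiff k (\<lambda>m. g m s) n) integrable_on S"
    and "bdiff k f n = c * integral S (\<lambda>s. bdiff k (\<lambda>m. g m s) n)"
    and "(\<lambda>s. bdiff k (\<lambda>m. g m s) (n - 1)) integrable_on S"
    and "bdiff k f (n - 1) = c * integral S (\<lambda>s. bdiff k (\<lambda>m. g m s) (n - 1))"
    using Suc.IH[of n] Suc.IH[of "n - 1"] Suc.prems by auto
  then show ?case
    by (simp add: integrable_diff integral_diff right_diff_distrib)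
qed simp

subsection \<open>Complete monotonicity\<close>

definition completely_monotone_above :: "real \<Rightarrow> (real \<Rightarrow> real) \<Rightarrow> bool" where
  "completely_monotone_above a f \<longleftrightarrow> (\<exists>D. (\<forall>x>a. D 0 x = f x) \<and>
      (\<forall>j. \<forall>x>a. (D j has_real_derivative D (Suc j) x) (at x)) \<and>
      (\<forall>j. \<forall>x>a. 0 \<le> (-1) ^ j * D j x))"

lemma alternating_derivative_antimono:
  assumes der: "\<And>j x. a < x \<Longrightarrow> (D j has_real_derivative D (Suc j) x) (at x)"
    and sign: "\<And>j x. a < x \<Longrightarrow> 0 \<le> (-1) ^ j * D j x"
    and "a < x" "x \<le> y"
  shows "(-1) ^ j * D j y \<le> (-1) ^ j * D j x"
proof -
  have "\<exists>d. ((\<lambda>z. (-1) ^ j * D j z) has_real_derivative d) (at z) \<and> d \<le> 0"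
    if "x \<le> z" "z \<le> y" for z
  proof (intro exI conjI)
    show "((\<lambda>z. (-1) ^ j * D j z) has_real_derivative (-1) ^ j * D (Suc j) z) (at z)"
      using der that \<open>a < x\<close> by (intro DERIV_cmult) auto
    show "(-1) ^ j * D (Suc j) z \<le> 0"
      using sign[of z "Suc j"] that \<open>a < x\<close> by simp
  qed
  from DERIV_nonpos_imp_nonincreasing[OF \<open>x \<le> y\<close> this] show ?thesis by simp
qed

lemma completely_monotone_above_nonneg:
  "completely_monotone_above a f \<Longrightarrow> a < x \<Longrightarrow> 0 \<le> f x"
  unfolding completely_monotone_above_def by (metis power_0 mult_1)

lemma completely_monotone_above_antimono:
  assumes "completely_monotone_above a f" "a < x" "x \<le> y"
  shows "f y \<le> f x"
proof -
  obtain D where "\<forall>x>a. D 0 x = f x"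
    and "\<And>j x. a < x \<Longrightarrow> (D j has_real_derivative D (Suc j) x) (at x)"
    and "\<And>j x. a < x \<Longrightarrow> 0 \<le> (-1) ^ j * D j x"
    using assms(1) unfolding completely_monotone_above_def by blast
  with alternating_derivative_antimono[of a D x y 0] assms(2,3) show ?thesis by simp
qed

lemma completely_monotone_above_diff:
  assumes "completely_monotone_above a f"
  shows "completely_monotone_above (a + 1) (\<lambda>x. f (x - 1) - f x)"
proof -
  obtain D where D0: "\<forall>x>a. D 0 x = f x"
    and der: "\<And>j x. a < x \<Longrightarrow> (D j has_real_derivative D (Suc j) x) (at x)"
    and sign: "\<And>j x. a < x \<Longrightarrow> 0 \<le> (-1) ^ j * D j x"
    using assms unfolding completely_monotone_above_def by blast
  define D' where "D' j x = D j (x - 1) - D j x" for j x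
  have "(D' j has_real_derivative D' (Suc j) x) (at x)" if "a + 1 < x" for j x
  proof -
    have "((\<lambda>x. D j (x - 1)) has_real_derivative D (Suc j) (x - 1)) (at x)"
      using DERIV_shift[of "D j" "D (Suc j) (x - 1)" x "-1"] der[of "x - 1" j] that by simp
    then show ?thesis
      unfolding D'_def using der[of x j] that by (auto intro: DERIV_diff)
  qed
  moreover have "0 \<le> (-1) ^ j * D' j x" if "a + 1 < x" for j x
    using alternating_derivative_antimono[OF der sign, where x="x - 1" and y=x and j=j] that
    by (simp add: D'_def right_diff_distrib)
  moreover have "D' 0 x = f (x - 1) - f x" if "a + 1 < x" for x
    using D0 that by (simp add: D'_def)
  ultimately show ?thesis
    unfolding completely_monotone_above_def by blast
qed

lemma completely_monotone_above_backward_diff_iter: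
  assumes "completely_monotone_above a f"
  shows "completely_monotone_above (a + real k) (\<lambda>x. (-1) ^ k * (backward_diff ^^ k) f x)"
proof (induction k)
  case 0
  then show ?case using assms by simp
next
  case (Suc k)
  have "(\<lambda>x. (-1) ^ Suc k * (backward_diff ^^ Suc k) f x) =
      (\<lambda>x. (-1) ^ k * (backward_diff ^^ k) f (x - 1) - (-1) ^ k * (backward_diff ^^ k) f x)"
    by (simp add: backward_diff_def algebra_simps)
  moreover have "a + real (Suc k) = a + real k + 1"
    by simp
  ultimately show ?case
    using completely_monotone_above_diff[OF Suc] by (simp only:)
qed

lemma completely_monotone_above_powr:
  assumes "0 \<le> \<alpha>"
  shows "completely_monotone_above 0 (\<lambda>x. x powr - \<alpha>)"
proof -
  define D where "D j x = (\<Prod>i<j. - \<alpha> - real i) * x powr (- \<alpha> - real j)" for j x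
  have "(D j has_real_derivative D (Suc j) x) (at x)" if "0 < x" for j x
  proof -
    have "(D j has_real_derivative
        (\<Prod>i<j. - \<alpha> - real i) * ((- \<alpha> - real j) * x powr (- \<alpha> - real j - 1))) (at x)"
      unfolding D_def by (intro DERIV_cmult has_real_derivative_powr that)
    then show ?thesis by (simp add: D_def algebra_simps)
  qed
  moreover have "0 \<le> (-1) ^ j * D j x" for j x
  proof -
    have "(-1) ^ j * (\<Prod>i<j. - \<alpha> - real i) = (\<Prod>i<j. \<alpha> + real i)"
      using prod_uminus[of "\<lambda>i. \<alpha> + real i" "{..<j}"] by (simp add: algebra_simps)
    moreover have "0 \<le> (\<Prod>i<j. \<alpha> + real i)"
      using assms by (intro prod_nonneg) auto
    ultimately show ?thesis
      unfolding D_def by (metis mult.assoc mult_nonneg_nonneg powr_ge_zero)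
  qed
  ultimately show ?thesis
    unfolding completely_monotone_above_def by (intro exI[of _ D]) (auto simp: D_def)
qed

lemma backward_diff_powr_alternating:
  assumes "0 \<le> \<alpha>" "real k < x"
  shows "0 \<le> (-1) ^ k * (backward_diff ^^ k) (\<lambda>y. y powr - \<alpha>) x"
  using completely_monotone_above_nonneg[OF completely_monotone_above_backward_diff_iter
      [OF completely_monotone_above_powr[OF assms(1)]]] assms(2)
  by simp

lemma backward_diff_powr_alternating_antimono:
  assumes "0 \<le> \<alpha>" "real k < x" "x \<le> y"
  shows "(-1) ^ k * (backward_diff ^^ k) (\<lambda>y. y powr - \<alpha>) y \<le>
    (-1) ^ k * (backward_diff ^^ k) (\<lambda>y. y powr - \<alpha>) x"
  using completely_monotone_above_antimono[OF completely_monotone_above_backward_diff_iter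
      [OF completely_monotone_above_powr[OF assms(1)]]] assms(2,3)
  by simp

subsection \<open>The binomial polynomial\<close>

definition binom_root :: "nat \<Rightarrow> nat \<Rightarrow> nat \<Rightarrow> real" where
  "binom_root q r i = real q + real i + 1 - real r"

definition binom_poly :: "nat \<Rightarrow> nat \<Rightarrow> real \<Rightarrow> real" where
  "binom_poly q r x = (\<Prod>i<r. x - binom_root q r i) / fact r"

definition binom_poly_deriv :: "nat \<Rightarrow> nat \<Rightarrow> real \<Rightarrow> real" where
  "binom_poly_deriv q r x = (\<Sum>i<r. \<Prod>j\<in>{..<r} - {i}. x - binom_root q r j) / fact r"

definition binom_log_deriv :: "nat \<Rightarrow> nat \<Rightarrow> real \<Rightarrow> real" where
  "binom_log_deriv q r x = (\<Sum>i<r. 1 / (x - binom_root q r i))"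

lemma gchoose_eq_binom_poly: "(x - real q + real r - 1) gchoose r = binom_poly q r x"
  unfolding gbinomial_prod_rev binom_poly_def binom_root_def
  by (intro arg_cong2[where f="(/)"] prod.cong) (auto simp: algebra_simps)

lemma has_real_derivative_binom_poly:
  "(binom_poly q r has_real_derivative binom_poly_deriv q r x) (at x)"
proof -
  have "((\<lambda>u. \<Prod>i<r. u - binom_root q r i) has_real_derivative
      (\<Sum>i<r. 1 * (\<Prod>j\<in>{..<r} - {i}. x - binom_root q r j))) (at x)"
    by (rule has_field_derivative_prod) (auto intro!: derivative_eq_intros)
  then show ?thesis
    unfolding binom_poly_def binom_poly_deriv_def by (simp add: DERIV_cdivide)
qed

lemma deriv_gchoose_eq_binom_poly_deriv:
  "deriv (\<lambda>x. (x - real q + real r - 1) gchoose r) s = binom_poly_deriv q r s"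
  unfolding gchoose_eq_binom_poly
  by (rule DERIV_imp_deriv[OF has_real_derivative_binom_poly])

lemma continuous_on_binom_poly_deriv: "continuous_on A (binom_poly_deriv q r)"
  unfolding binom_poly_deriv_def by (intro continuous_intros) auto

lemma binom_poly_deriv_eq_mult_log_deriv:
  assumes "\<And>i. i < r \<Longrightarrow> x \<noteq> binom_root q r i"
  shows "binom_poly_deriv q r x = binom_poly q r x * binom_log_deriv q r x"
proof -
  have "((\<lambda>u. \<Prod>i<r. u - binom_root q r i) has_real_derivative
      (\<Prod>i<r. x - binom_root q r i) * (\<Sum>i<r. 1 / (x - binom_root q r i))) (at x)"
  proof (rule has_field_derivative_prod'[where f'="\<lambda>_. 1", simplified])
    show "((\<lambda>u. u - binom_root q r i) has_real_derivative 1) (at x)" for i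
      by (auto intro!: derivative_eq_intros)
  qed (use assms in auto)
  then have "(binom_poly q r has_real_derivative binom_poly q r x * binom_log_deriv q r x) (at x)"
    unfolding binom_poly_def binom_log_deriv_def using DERIV_cdivide by (fastforce simp: field_simps)
  then show ?thesis
    using has_real_derivative_binom_poly DERIV_unique by blast
qed

lemma binom_root_notin_unit_interval: "binom_root q r i \<le> 0 \<or> 1 \<le> binom_root q r i"
proof (cases "q + i + 1 \<le> r")
  case True
  then have "real q + real i + 1 \<le> real r" by linarith
  then show ?thesis unfolding binom_root_def by auto
next
  case False
  then have "real r + 1 \<le> real q + real i + 1" by linarith
  then show ?thesis unfolding binom_root_def by auto
qed

lemma binom_log_deriv_antimono:
  assumes "0 < s" "s \<le> t" "t < 1"
  shows "binom_log_deriv q r t \<le> binom_log_deriv q r s"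
  unfolding binom_log_deriv_def
proof (rule sum_mono)
  fix i
  consider "binom_root q r i \<le> 0" | "1 \<le> binom_root q r i"
    using binom_root_notin_unit_interval by blast
  then show "1 / (t - binom_root q r i) \<le> 1 / (s - binom_root q r i)"
  proof cases
    case 1
    then show ?thesis using assms by (intro divide_left_mono) auto
  next
    case 2
    then show ?thesis using assms by (simp add: divide_simps)
  qed
qed

lemma binom_poly_deriv_sign_le:
  assumes "r \<le> q" "0 < s" "s < 1"
  shows "0 \<le> (-1) ^ (r + 1) * binom_poly_deriv q r s"
proof -
  have root_gt: "s < binom_root q r i" if "i < r" for i
    using assms that unfolding binom_root_def by auto
  then have "binom_poly_deriv q r s = binom_poly q r s * binom_log_deriv q r s"
    by (intro binom_poly_deriv_eq_mult_log_deriv) force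
  moreover have "binom_log_deriv q r s \<le> 0"
    unfolding binom_log_deriv_def using root_gt
    by (intro sum_nonpos) (simp add: divide_le_0_iff less_imp_le)
  moreover have "0 \<le> (-1) ^ r * binom_poly q r s"
  proof -
    have "(-1) ^ r * (\<Prod>i<r. s - binom_root q r i) = (\<Prod>i<r. binom_root q r i - s)"
      using prod_uminus[of "\<lambda>i. s - binom_root q r i" "{..<r}"] by simp
    moreover have "0 \<le> (\<Prod>i<r. binom_root q r i - s)"
      using root_gt by (intro prod_nonneg) (simp add: less_imp_le)
    ultimately show ?thesis unfolding binom_poly_def by simp
  qed
  ultimately show ?thesis
    using mult_nonneg_nonpos[of "(-1) ^ r * binom_poly q r s" "binom_log_deriv q r s"]
    by (simp add: algebra_simps)
qed

lemma antimono_sign_change: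
  fixes L :: "real \<Rightarrow> real"
  assumes "a \<le> b" and antimono: "\<And>s t. a < s \<Longrightarrow> s \<le> t \<Longrightarrow> t < b \<Longrightarrow> L t \<le> L s"
  obtains c where "a \<le> c" "c \<le> b"
    "\<And>s. a < s \<Longrightarrow> s < c \<Longrightarrow> 0 \<le> L s" "\<And>s. c < s \<Longrightarrow> s < b \<Longrightarrow> L s < 0"
proof -
  define S where "S = insert a {t. a < t \<and> t < b \<and> 0 \<le> L t}"
  have "S \<noteq> {}" "bdd_above S"
    unfolding S_def using assms(1) by (auto intro: bdd_aboveI[of _ b])
  show ?thesis
  proof
    show "a \<le> Sup S" "Sup S \<le> b"
      using \<open>S \<noteq> {}\<close> \<open>bdd_above S\<close> assms(1)
      by (auto intro: cSup_upper cSup_least simp: S_def)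
  next
    fix s assume "a < s" "s < Sup S"
    then obtain t where "t \<in> S" "s < t"
      using less_cSup_iff[OF \<open>S \<noteq> {}\<close> \<open>bdd_above S\<close>] by blast
    with \<open>a < s\<close> antimono[of s t] show "0 \<le> L s"
      unfolding S_def by force
  next
    fix s assume "Sup S < s" "s < b"
    then have "s \<notin> S"
      using cSup_upper[OF _ \<open>bdd_above S\<close>] by force
    moreover have "a < s"
      using \<open>Sup S < s\<close> cSup_upper[OF _ \<open>bdd_above S\<close>, of a] by (simp add: S_def)
    ultimately show "L s < 0"
      using \<open>s < b\<close> unfolding S_def by auto
  qed
qed

lemma binom_poly_sign_gt:
  assumes "q < r" "0 < s" "s < 1"
  shows "0 < (-1) ^ q * binom_poly q r s"
proof -
  have split: "{..<r} = {..<r - q} \<union> {r - q..<r}" and disj: "{..<r - q} \<inter> {r - q..<r} = {}"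
    by auto
  have "0 < (\<Prod>i<r - q. s - binom_root q r i)"
    using assms by (intro prod_pos) (auto simp: binom_root_def)
  moreover have "(-1) ^ q * (\<Prod>i\<in>{r - q..<r}. s - binom_root q r i) =
      (\<Prod>i\<in>{r - q..<r}. binom_root q r i - s)"
    using prod_uminus[of "\<lambda>i. s - binom_root q r i" "{r - q..<r}"] assms by simp
  moreover have "0 < (\<Prod>i\<in>{r - q..<r}. binom_root q r i - s)"
    using assms by (intro prod_pos) (auto simp: binom_root_def)
  ultimately have "0 < (-1) ^ q * (\<Prod>i<r. s - binom_root q r i)"
    unfolding split prod.union_disjoint[OF _ _ disj, simplified]
    by (simp add: mult.left_commute[of "(-1) ^ q"])
  then show ?thesis
    unfolding binom_poly_def by simp
qed

lemma binom_poly_zero_left: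
  assumes "q < r"
  shows "binom_poly q r 0 = 0"
proof -
  have "\<exists>i<r. 0 - binom_root q r i = 0"
    using assms by (intro exI[of _ "r - q - 1"]) (simp add: binom_root_def of_nat_diff)
  then show ?thesis
    unfolding binom_poly_def by (auto simp: prod_zero_iff)
qed

lemma binom_poly_zero_right:
  assumes "q < r" "1 \<le> q"
  shows "binom_poly q r 1 = 0"
proof -
  have "\<exists>i<r. 1 - binom_root q r i = 0"
    using assms by (intro exI[of _ "r - q"]) (simp add: binom_root_def of_nat_diff)
  then show ?thesis
    unfolding binom_poly_def by (auto simp: prod_zero_iff)
qed

lemma binom_poly_deriv_negative_near_one:
  assumes "q < r" "1 \<le> q"
  obtains s where "1/2 < s" "s < 1" "(-1) ^ q * binom_poly_deriv q r s < 0"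
proof (rule ccontr)
  assume "\<not> thesis"
  with that have nonneg: "0 \<le> (-1) ^ q * binom_poly_deriv q r s" if "1/2 < s" "s < 1" for s
    using \<open>1/2 < s\<close> \<open>s < 1\<close> by force
  have "(-1) ^ q * binom_poly q r (1/2) \<le> (-1) ^ q * binom_poly q r 1"
  proof (rule DERIV_nonneg_imp_increasing_open[where f="\<lambda>x. (-1) ^ q * binom_poly q r x"])
    fix x :: real assume "1/2 < x" "x < 1"
    moreover have "((\<lambda>x. (-1) ^ q * binom_poly q r x) has_real_derivative
        (-1) ^ q * binom_poly_deriv q r x) (at x)"
      by (intro DERIV_cmult has_real_derivative_binom_poly)
    ultimately show "\<exists>y. ((\<lambda>x. (-1) ^ q * binom_poly q r x) has_real_derivative y) (at x) \<and> 0 \<le> y"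
      using nonneg by blast
  next
    show "continuous_on {1/2..1} (\<lambda>x. (-1) ^ q * binom_poly q r x)"
      using has_real_derivative_binom_poly
      by (intro continuous_on_mult_left continuous_at_imp_continuous_on) (auto intro: DERIV_isCont)
  qed simp
  then show False
    using binom_poly_sign_gt[OF assms(1), of "1/2"] binom_poly_zero_right[OF assms] by simp
qed

lemma binom_poly_deriv_sign_change:
  assumes "q < r" "1 \<le> q"
  obtains c where "0 \<le> c" "c < 1"
    "\<And>s. 0 < s \<Longrightarrow> s < c \<Longrightarrow> 0 \<le> (-1) ^ q * binom_poly_deriv q r s"
    "\<And>s. c < s \<Longrightarrow> s < 1 \<Longrightarrow> (-1) ^ q * binom_poly_deriv q r s \<le> 0"
proof -
  have deriv_eq: "(-1) ^ q * binom_poly_deriv q r s = ((-1) ^ q * binom_poly q r s) * binom_log_deriv q r s"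
    if "0 < s" "s < 1" for s
  proof -
    have "s \<noteq> binom_root q r i" for i
      using binom_root_notin_unit_interval[of q r i] that by auto
    then have "binom_poly_deriv q r s = binom_poly q r s * binom_log_deriv q r s"
      by (intro binom_poly_deriv_eq_mult_log_deriv)
    then show ?thesis by (simp add: mult.assoc)
  qed
  obtain c where c: "0 \<le> c" "c \<le> 1"
    and below: "\<And>s. 0 < s \<Longrightarrow> s < c \<Longrightarrow> 0 \<le> binom_log_deriv q r s"
    and above: "\<And>s. c < s \<Longrightarrow> s < 1 \<Longrightarrow> binom_log_deriv q r s < 0"
    by (rule antimono_sign_change[of 0 1 "binom_log_deriv q r"]) (auto intro: binom_log_deriv_antimono)
  have sign_below: "0 \<le> (-1) ^ q * binom_poly_deriv q r s" if "0 < s" "s < c" for s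
  proof -
    have "s < 1" using that c by linarith
    then show ?thesis
      unfolding deriv_eq[OF \<open>0 < s\<close> \<open>s < 1\<close>]
      using below[OF that] binom_poly_sign_gt[OF assms(1) \<open>0 < s\<close> \<open>s < 1\<close>] by simp
  qed
  obtain s where "1/2 < s" "s < 1" "(-1) ^ q * binom_poly_deriv q r s < 0"
    using binom_poly_deriv_negative_near_one[OF assms] .
  then have "c \<noteq> 1"
    using sign_below[of s] by fastforce
  show ?thesis
  proof
    show "0 \<le> c" "c < 1" using c \<open>c \<noteq> 1\<close> by auto
  next
    fix s assume "c < s" "s < 1"
    moreover have "0 < s" using \<open>c < s\<close> c by linarith
    ultimately show "(-1) ^ q * binom_poly_deriv q r s \<le> 0"
      unfolding deriv_eq[OF \<open>0 < s\<close> \<open>s < 1\<close>]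
      using above binom_poly_sign_gt[OF assms(1)] by (simp add: mult_pos_neg less_imp_le)
  qed (rule sign_below)
qed

subsection \<open>Integrals\<close>

lemma integral_nonneg_interior:
  fixes f :: "real \<Rightarrow> real"
  assumes "\<And>s. a < s \<Longrightarrow> s < b \<Longrightarrow> 0 \<le> f s"
  shows "0 \<le> integral {a..b} f"
proof -
  define g where "g s = (if s \<in> {a, b} then 0 else f s)" for s
  have "integral {a..b} f = integral {a..b} g"
    by (rule integral_spike[of "{a, b}"]) (auto simp: g_def)
  moreover have "0 \<le> integral {a..b} g"
  proof (cases "g integrable_on {a..b}")
    case True
    then show ?thesis
      by (rule integral_nonneg) (use assms in \<open>auto simp: g_def\<close>)
  qed (simp add: not_integrable_integral)
  ultimately show ?thesis by simp
qed

text \<open>A second-mean-value argument: as \<open>w\<close> has integral zero, \<open>\<phi>\<close> may be replaced by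
  \<open>\<phi> - \<phi> c\<close>, after which the integrand is nonnegative.\<close>
lemma integral_mult_sign_change_nonneg:
  fixes \<phi> w :: "real \<Rightarrow> real"
  assumes "(\<lambda>s. \<phi> s * w s) integrable_on {a..b}" "w integrable_on {a..b}" "integral {a..b} w = 0"
    and "\<And>s. a < s \<Longrightarrow> s < c \<Longrightarrow> \<phi> c \<le> \<phi> s \<and> 0 \<le> w s"
    and "\<And>s. c < s \<Longrightarrow> s < b \<Longrightarrow> \<phi> s \<le> \<phi> c \<and> w s \<le> 0"
  shows "0 \<le> integral {a..b} (\<lambda>s. \<phi> s * w s)"
proof -
  have "integral {a..b} (\<lambda>s. \<phi> s * w s) = integral {a..b} (\<lambda>s. \<phi> s * w s - \<phi> c * w s)"
    using integral_diff[OF assms(1) integrable_on_mult_right[OF assms(2)]] assms(3) by simp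
  also have "0 \<le> \<dots>"
  proof (rule integral_nonneg_interior)
    fix s assume "a < s" "s < b"
    then consider "s < c" | "s = c" | "c < s" by linarith
    then show "0 \<le> \<phi> s * w s - \<phi> c * w s"
    proof cases
      case 1
      then have "0 \<le> (\<phi> s - \<phi> c) * w s"
        using assms(4)[OF \<open>a < s\<close>] by (intro mult_nonneg_nonneg) auto
      then show ?thesis by (simp add: left_diff_distrib)
    next
      case 3
      then have "0 \<le> (\<phi> c - \<phi> s) * - w s"
        using assms(5)[OF _ \<open>s < b\<close>] by (intro mult_nonneg_nonneg) auto
      then show ?thesis by (simp add: algebra_simps)
    qed simp
  qed
  finally show ?thesis .
qed

lemma integrable_continuous_mult_nonneg:
  fixes f g :: "real \<Rightarrow> real"
  assumes "f integrable_on {a..b}" "\<And>s. s \<in> {a..b} \<Longrightarrow> 0 \<le> f s" "continuous_on {a..b} g"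
  shows "(\<lambda>s. f s * g s) integrable_on {a..b}"
proof -
  have "(\<lambda>s. g s * f s) absolutely_integrable_on {a..b}"
  proof (rule absolutely_integrable_bounded_measurable_product_real)
    show "g \<in> borel_measurable (lebesgue_on {a..b})"
      using assms(3) by (intro continuous_imp_measurable_on_sets_lebesgue) auto
    show "bounded (g ` {a..b})"
      using assms(3) by (intro compact_imp_bounded compact_continuous_image) auto
    show "f absolutely_integrable_on {a..b}"
      using assms(1,2) by (rule nonnegative_absolutely_integrable_1)
  qed auto
  then have "(\<lambda>s. g s * f s) integrable_on {a..b}"
    by (rule set_lebesgue_integral_eq_integral(1))
  then show ?thesis
    by (simp add: mult.commute)
qed

lemma integrable_on_powr_reflected:
  fixes m :: real
  assumes "0 \<le> m" "\<alpha> < 1"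
  shows "(\<lambda>s. (m + 1 - s) powr - \<alpha>) integrable_on {0..1}"
proof -
  have "(\<lambda>y. y powr - \<alpha>) integrable_on {0..m + 1}"
    using assms by (intro integrable_on_powr_from_0) auto
  then have "(\<lambda>y. y powr - \<alpha>) integrable_on {m..m + 1}"
    by (rule integrable_subinterval_real) (use assms in auto)
  from integrable_affinity[OF this[folded cbox_interval], of "-1" "m + 1"] show ?thesis
    by simp
qed

lemma I_coef_eq_integral:
  assumes "0 \<le> n"
  shows "I_coef \<alpha> q r n = 1 / Gamma (1 - \<alpha>) *
    integral {0..1} (\<lambda>s. (real_of_int n + 1 - s) powr - \<alpha> * binom_poly_deriv q r s)"
  using assms by (simp add: I_coef_def deriv_gchoose_eq_binom_poly_deriv)

lemma bdiff_I_coef_eq_integral: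
  assumes "\<alpha> < 1" "int k \<le> n"
  defines "\<Phi> \<equiv> (backward_diff ^^ k) (\<lambda>y. y powr - \<alpha>)"
  shows "(\<lambda>s. \<Phi> (real_of_int n + 1 - s) * binom_poly_deriv q r s) integrable_on {0..1}"
    and "bdiff k (I_coef \<alpha> q r) n = 1 / Gamma (1 - \<alpha>) *
      integral {0..1} (\<lambda>s. \<Phi> (real_of_int n + 1 - s) * binom_poly_deriv q r s)"
proof -
  define g where "g m s = (real_of_int m + 1 - s) powr - \<alpha> * binom_poly_deriv q r s" for m s
  have "bdiff k (\<lambda>m. g m s) n = \<Phi> (real_of_int n + 1 - s) * binom_poly_deriv q r s" for s
    using bdiff_shift_eq_backward_diff[of k "\<lambda>y. y powr - \<alpha>" "1 - s" n]
    by (simp add: g_def \<Phi>_def bdiff_mult_right add_diff_eq)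
  moreover have "(\<lambda>s. bdiff k (\<lambda>m. g m s) n) integrable_on {0..1} \<and>
      bdiff k (I_coef \<alpha> q r) n = 1 / Gamma (1 - \<alpha>) * integral {0..1} (\<lambda>s. bdiff k (\<lambda>m. g m s) n)"
  proof (rule bdiff_integral)
    fix m assume "n - int k \<le> m"
    then have "0 \<le> m" using assms(2) by linarith
    show "g m integrable_on {0..1}"
      unfolding g_def using \<open>0 \<le> m\<close> assms(1)
      by (intro integrable_continuous_mult_nonneg integrable_on_powr_reflected
          continuous_on_binom_poly_deriv) auto
    show "I_coef \<alpha> q r m = 1 / Gamma (1 - \<alpha>) * integral {0..1} (g m)"
      unfolding g_def using \<open>0 \<le> m\<close> by (rule I_coef_eq_integral)
  qed
  ultimately show "(\<lambda>s. \<Phi> (real_of_int n + 1 - s) * binom_poly_deriv q r s) integrable_on {0..1}"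
    and "bdiff k (I_coef \<alpha> q r) n = 1 / Gamma (1 - \<alpha>) *
      integral {0..1} (\<lambda>s. \<Phi> (real_of_int n + 1 - s) * binom_poly_deriv q r s)"
    by simp_all
qed

lemma integral_binom_poly_deriv_sign_le:
  assumes "r \<le> q" "\<And>s. 0 < s \<Longrightarrow> s < 1 \<Longrightarrow> 0 \<le> g s"
  shows "0 \<le> (-1) ^ (r + 1) * integral {0..1} (\<lambda>s. g s * binom_poly_deriv q r s)"
proof -
  have "0 \<le> integral {0..1} (\<lambda>s. g s * ((-1) ^ (r + 1) * binom_poly_deriv q r s))"
  proof (rule integral_nonneg_interior)
    fix s :: real assume "0 < s" "s < 1"
    with assms show "0 \<le> g s * ((-1) ^ (r + 1) * binom_poly_deriv q r s)"
      by (intro mult_nonneg_nonneg binom_poly_deriv_sign_le)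
  qed
  then show ?thesis
    by (simp only: mult.left_commute[of "g _"] integral_mult_right)
qed

lemma integral_binom_poly_deriv_sign_gt:
  assumes "q < r" "1 \<le> q" "(\<lambda>s. g s * binom_poly_deriv q r s) integrable_on {0..1}"
    and "\<And>s t. s \<le> t \<Longrightarrow> t < 1 \<Longrightarrow> g t \<le> g s"
  shows "0 \<le> (-1) ^ q * integral {0..1} (\<lambda>s. g s * binom_poly_deriv q r s)"
proof -
  obtain c where c: "0 \<le> c" "c < 1"
    and below: "\<And>s. 0 < s \<Longrightarrow> s < c \<Longrightarrow> 0 \<le> (-1) ^ q * binom_poly_deriv q r s"
    and above: "\<And>s. c < s \<Longrightarrow> s < 1 \<Longrightarrow> (-1) ^ q * binom_poly_deriv q r s \<le> 0"
    using binom_poly_deriv_sign_change[OF assms(1,2)] by blast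
  have "(binom_poly_deriv q r has_integral binom_poly q r 1 - binom_poly q r 0) {0..1}"
    using has_real_derivative_binom_poly
    by (intro fundamental_theorem_of_calculus)
      (auto simp: has_real_derivative_iff_has_vector_derivative[symmetric] intro: has_field_derivative_at_within)
  then have "((\<lambda>s. (-1) ^ q * binom_poly_deriv q r s) has_integral
      (-1) ^ q * (binom_poly q r 1 - binom_poly q r 0)) {0..1}"
    by (rule has_integral_mult_right)
  then have w: "((\<lambda>s. (-1) ^ q * binom_poly_deriv q r s) has_integral 0) {0..1}"
    by (simp add: binom_poly_zero_left[OF assms(1)] binom_poly_zero_right[OF assms(1,2)])
  have "0 \<le> integral {0..1} (\<lambda>s. g s * ((-1) ^ q * binom_poly_deriv q r s))"
  proof (rule integral_mult_sign_change_nonneg[where c=c])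
    show "(\<lambda>s. g s * ((-1) ^ q * binom_poly_deriv q r s)) integrable_on {0..1}"
      using integrable_on_mult_right[OF assms(3), of "(-1) ^ q"] by (simp add: mult.left_commute)
    show "(\<lambda>s. (-1) ^ q * binom_poly_deriv q r s) integrable_on {0..1}"
      using w by blast
    show "integral {0..1} (\<lambda>s. (-1) ^ q * binom_poly_deriv q r s) = 0"
      using w by (rule integral_unique)
    show "g c \<le> g s \<and> 0 \<le> (-1) ^ q * binom_poly_deriv q r s" if "0 < s" "s < c" for s
      using assms(4)[of s c] below[OF that] that c by simp
    show "g s \<le> g c \<and> (-1) ^ q * binom_poly_deriv q r s \<le> 0" if "c < s" "s < 1" for s
      using assms(4)[of c s] above[OF that] that by simp
  qed
  then show ?thesis
    by (simp only: mult.left_commute[of "g _"] integral_mult_right)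
qed

theorem lemma2p4:
  fixes \<alpha> :: real and q r k :: nat and n :: int
  assumes "0 < \<alpha>" "\<alpha> < 1" "q \<ge> 1" "r \<ge> 1" "int k \<le> n"
  shows "(r \<le> q \<longrightarrow> (-1) ^ (k + r + 1) * bdiff k (I_coef \<alpha> q r) n \<ge> 0) \<and>
         (r > q \<longrightarrow> (-1) ^ (k + q + 1) * bdiff k (I_coef \<alpha> q r) n \<ge> 0)"
proof -
  define \<Phi> where "\<Phi> = (backward_diff ^^ k) (\<lambda>y. y powr - \<alpha>)"
  define J where "J = integral {0..1} (\<lambda>s. \<Phi> (real_of_int n + 1 - s) * binom_poly_deriv q r s)"
  have int: "(\<lambda>s. \<Phi> (real_of_int n + 1 - s) * binom_poly_deriv q r s) integrable_on {0..1}"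
    and eq: "bdiff k (I_coef \<alpha> q r) n = 1 / Gamma (1 - \<alpha>) * J"
    using bdiff_I_coef_eq_integral[OF assms(2,5)] by (simp_all add: \<Phi>_def J_def)
  have inside: "real k < real_of_int n + 1 - s" if "s < 1" for s
    using assms(5) that by linarith
  have "0 \<le> (-1) ^ (k + r + 1) * J" if "r \<le> q"
    using integral_binom_poly_deriv_sign_le[OF that, of "\<lambda>s. (-1) ^ k * \<Phi> (real_of_int n + 1 - s)"]
      backward_diff_powr_alternating[OF _ inside] assms(1)
    by (simp add: J_def \<Phi>_def power_add mult_ac)
  moreover have "0 \<le> (-1) ^ (k + q + 1) * J" if "q < r"
  proof -
    define g where "g s = (-1) ^ (k + 1) * \<Phi> (real_of_int n + 1 - s)" for s
    have "(\<lambda>s. g s * binom_poly_deriv q r s) integrable_on {0..1}"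
      using integrable_on_mult_right[OF int, of "(-1) ^ (k + 1)"] by (simp only: g_def mult.assoc)
    moreover have "g t \<le> g s" if "s \<le> t" "t < 1" for s t
      using backward_diff_powr_alternating_antimono[OF _ inside[OF \<open>t < 1\<close>], of \<alpha>] assms(1) that
      by (simp add: g_def \<Phi>_def)
    ultimately have "0 \<le> (-1) ^ q * integral {0..1} (\<lambda>s. g s * binom_poly_deriv q r s)"
      by (rule integral_binom_poly_deriv_sign_gt[OF that assms(3)])
    then show ?thesis
      by (simp add: g_def J_def power_add mult_ac)
  qed
  moreover have "0 \<le> 1 / Gamma (1 - \<alpha>)"
    using assms(2) by (simp add: Gamma_real_pos less_imp_le)
  ultimately show ?thesis
    unfolding eq mult.left_commute[of "(-1) ^ _" "1 / Gamma (1 - \<alpha>)"]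
    using mult_nonneg_nonneg by blast
qed

end
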